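(* Let $X$ be a complete nonsingular toric variety which is Fano and all of whose toric subvarieties are Fano, with fan $\Delta$. Let $\{D_1,\ldots,D_j\}$ and $\{\widehat D_1,\ldots,\widehat D_k\}$ be distinct primitive sets with primitive relations $\rho_1+\cdots+\rho_j=\rho'$ and $\widehat\rho_1+\cdots+\widehat\rho_k=\widehat\rho'$, where $\rho',\widehat\rho'$ are ray generators. If $\rho'=\widehat\rho'$, or $\rho'$ and $\widehat\rho'$ span a cone of $\Delta$, then $\{\rho_1,\ldots,\rho_j\}\cap\{\widehat\rho_1,\ldots,\widehat\rho_k\}=\emptyset$.
   Context: Toric divisors $D$ correspond to ray generators $\rho$ (primitive generators of rays of $\Delta$). A primitive set is a set of toric divisors with empty intersection whose proper subsets all have nonempty intersection; its primitive relation expresses the sum of its ray generators as a positive combination of the generators of the unique cone containing that sum in its relative interior. *)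

theory Defs
  imports "HOL-Analysis.Analysis"
begin

text \<open>Combinatorial model of a complete nonsingular toric variety X_\<Delta>.
  The lattice N is the integer points of real^'n.  A (simplicial) fan \<Delta> is
  recorded by its set of ray generators R and by the set of cones, each cone
  being identified with the finite set of ray generators of its rays.\<close>

definition lattice_point :: "real ^ 'n \<Rightarrow> bool" where
  "lattice_point v \<longleftrightarrow> (\<forall>i. v $ i \<in> \<int>)"

definition primitive_vector :: "real ^ 'n \<Rightarrow> bool" where
  "primitive_vector v \<longleftrightarrow> lattice_point v \<and> v \<noteq> 0 \<and>
     (\<forall>t::real. 0 < t \<and> lattice_point (t *\<^sub>R v) \<longrightarrow> 1 \<le> t)"

definition pos_cone :: "(real ^ 'n) set \<Rightarrow> (real ^ 'n) set" where
  "pos_cone S = {x. \<exists>c. (\<forall>v\<in>S. 0 \<le> c v) \<and> x = (\<Sum>v\<in>S. c v *\<^sub>R v)}"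

definition part_of_Z_basis :: "(real ^ 'n) set \<Rightarrow> bool" where
  "part_of_Z_basis S \<longleftrightarrow> (\<exists>B. S \<subseteq> B \<and> finite B \<and> card B = CARD('n) \<and>
      (\<forall>b\<in>B. lattice_point b) \<and>
      (\<forall>x. lattice_point x \<longrightarrow> (\<exists>k::real ^ 'n \<Rightarrow> int. x = (\<Sum>b\<in>B. of_int (k b) *\<^sub>R b))))"

definition complete_nonsingular_fan ::
  "(real ^ 'n) set \<Rightarrow> (real ^ 'n) set set \<Rightarrow> bool" where
  "complete_nonsingular_fan R \<Delta> \<longleftrightarrow>
     finite R \<and> (\<forall>\<rho>\<in>R. primitive_vector \<rho>) \<and>
     (\<forall>\<sigma>\<in>\<Delta>. \<sigma> \<subseteq> R) \<and>
     (\<forall>\<rho>\<in>R. {\<rho>} \<in> \<Delta>) \<and>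
     (\<forall>\<sigma>\<in>\<Delta>. \<forall>\<tau>. \<tau> \<subseteq> \<sigma> \<longrightarrow> \<tau> \<in> \<Delta>) \<and>
     (\<forall>\<sigma>\<in>\<Delta>. part_of_Z_basis \<sigma>) \<and>
     (\<forall>\<sigma>\<in>\<Delta>. \<forall>\<tau>\<in>\<Delta>. pos_cone \<sigma> \<inter> pos_cone \<tau> = pos_cone (\<sigma> \<inter> \<tau>)) \<and>
     (\<Union>\<sigma>\<in>\<Delta>. pos_cone \<sigma>) = UNIV"

definition maximal_cone :: "(real ^ 'n) set set \<Rightarrow> (real ^ 'n) set \<Rightarrow> bool" where
  "maximal_cone \<Delta> \<sigma> \<longleftrightarrow> \<sigma> \<in> \<Delta> \<and> (\<forall>\<sigma>'\<in>\<Delta>. \<sigma> \<subseteq> \<sigma>' \<longrightarrow> \<sigma>' = \<sigma>)"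

text \<open>The orbit closure V(\<tau>) is the toric variety of the star fan of \<tau> in
  N(\<tau>) = N / (span \<tau> \<inter> N).  Its rays are the images of the \<rho> \<notin> \<tau> with
  \<tau> \<union> {\<rho>} \<in> \<Delta>, its maximal cones the images of the maximal cones \<sigma> \<supseteq> \<tau>,
  and linear functionals on N(\<tau>)_R are the functionals m on N_R vanishing on \<tau>.
  V(\<tau>) is Fano iff its anticanonical divisor (sum of all its toric divisors)
  is ample, i.e. (toric ampleness criterion) iff for every maximal cone \<sigma>
  there is m with m(\<rho>) = 1 on the rays of \<sigma> and m(\<rho>) < 1 on the other rays.\<close>
definition orbit_closure_fano ::
  "(real ^ 'n) set \<Rightarrow> (real ^ 'n) set set \<Rightarrow> (real ^ 'n) set \<Rightarrow> bool" where
  "orbit_closure_fano R \<Delta> \<tau> \<longleftrightarrow>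
     (\<forall>\<sigma>. maximal_cone \<Delta> \<sigma> \<and> \<tau> \<subseteq> \<sigma> \<longrightarrow>
        (\<exists>m::real ^ 'n. (\<forall>\<rho>\<in>\<tau>. m \<bullet> \<rho> = 0) \<and>
            (\<forall>\<rho>\<in>\<sigma> - \<tau>. m \<bullet> \<rho> = 1) \<and>
            (\<forall>\<rho>\<in>R. \<rho> \<notin> \<sigma> \<and> \<tau> \<union> {\<rho>} \<in> \<Delta> \<longrightarrow> m \<bullet> \<rho> < 1)))"

text \<open>X itself is the orbit closure of the zero cone.\<close>
definition toric_fano :: "(real ^ 'n) set \<Rightarrow> (real ^ 'n) set set \<Rightarrow> bool" where
  "toric_fano R \<Delta> \<longleftrightarrow> orbit_closure_fano R \<Delta> {}"

text \<open>Primitive set: toric divisors with empty intersection (= their rays do not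
  span a cone) all of whose proper subsets have nonempty intersection.\<close>
definition primitive_set :: "(real ^ 'n) set \<Rightarrow> (real ^ 'n) set set \<Rightarrow> (real ^ 'n) set \<Rightarrow> bool" where
  "primitive_set R \<Delta> P \<longleftrightarrow> P \<subseteq> R \<and> P \<notin> \<Delta> \<and> (\<forall>Q. Q \<subset> P \<longrightarrow> Q \<in> \<Delta>)"

text \<open>Primitive relation of P: sum of P = \<Sum> c_\<rho> \<rho> over the generators of the
  cone \<sigma> containing the sum in its relative interior (all c_\<rho> > 0).\<close>
definition primitive_relation ::
  "(real ^ 'n) set \<Rightarrow> (real ^ 'n) set set \<Rightarrow> (real ^ 'n) set \<Rightarrow> (real ^ 'n) set \<Rightarrow> (real ^ 'n \<Rightarrow> real) \<Rightarrow> bool" where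
  "primitive_relation R \<Delta> P \<sigma> c \<longleftrightarrow> primitive_set R \<Delta> P \<and> \<sigma> \<in> \<Delta> \<and>
     (\<forall>\<rho>\<in>\<sigma>. 0 < c \<rho>) \<and> (\<Sum>\<rho>\<in>P. \<rho>) = (\<Sum>\<rho>\<in>\<sigma>. c \<rho> *\<^sub>R \<rho>)"

end

theory Submission
  imports Defs
begin

(* Let x \<in> P \<inter> Q and write r, r' for \<rho>', \<rho>h'.  The key step is an exchange property: if P is
  primitive with \<Sum>P = r and {r, z} is a cone, then (P - {y}) \<union> {r, z} is a cone for every
  y \<in> P other than z.  It is proved by enlarging a face Q \<union> {r, z}, Q \<subseteq> P - {y}, one generator at
  a time: choose a maximal cone \<sigma> \<supseteq> Q \<union> {r, z} avoiding y; the ampleness criterion for the Fano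
  orbit closure V(Q) gives an integral functional that is 1 on r, 0 on Q and \<le> 0 on every
  element of P - Q outside \<sigma>, so \<Sum>P = r forces some element of P - Q other than y into \<sigma>.
  Hence (P - {x}) \<union> {r, r'} and (Q - {x}) \<union> {r, r'} are cones, both containing
  \<Sum>(P - {x}) + r' = r + r' - x = \<Sum>(Q - {x}) + r.  Coordinates with respect to the cones of a
  nonsingular fan are unique; comparing the coefficients of r gives r = r', and then
  P - {x} = Q - {x}, so P = Q. *)

lemma independent_sum_scaleR_coeffs_eq:
  fixes S :: "'a::real_vector set"
  assumes "independent S" "finite S" "(\<Sum>x\<in>S. f x *\<^sub>R x) = (\<Sum>x\<in>S. g x *\<^sub>R x)" "x \<in> S"
  shows "f x = g x"
proof -
  have "(\<Sum>x\<in>S. (f x - g x) *\<^sub>R x) = 0"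
    using assms(3) by (simp add: scaleR_diff_left sum_subtractf)
  then show ?thesis
    using real_vector.independentD[OF assms(1,2) order_refl] assms(4) by fastforce
qed

lemma sum_if_scaleR:
  fixes A :: "'a::real_vector set"
  assumes "finite A"
  shows "(\<Sum>x\<in>A. (if x \<in> B then c x else 0) *\<^sub>R x) = (\<Sum>x\<in>A \<inter> B. c x *\<^sub>R x)"
  using sum.inter_restrict[OF assms, of "\<lambda>x. c x *\<^sub>R x" B]
  by (simp add: if_distrib[of "\<lambda>a. a *\<^sub>R _"] cong: if_cong)

lemma sum_in_pos_cone: "(\<Sum>x\<in>S. x) \<in> pos_cone S"
  unfolding pos_cone_def by (auto intro!: exI[of _ "\<lambda>_. 1"])

lemma pos_cone_subset_span: "pos_cone S \<subseteq> span S"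
  unfolding pos_cone_def by (auto intro: span_sum span_scale span_base)

lemma pos_cone_eq_convex_cone_hull:
  assumes "finite S"
  shows "pos_cone S = convex_cone hull S"
proof
  have "(\<Sum>v\<in>T. c v *\<^sub>R v) \<in> convex_cone hull S" if "T \<subseteq> S" "\<forall>v\<in>S. 0 \<le> c v" for T c
    using finite_subset[OF that(1) assms] that
    by (induction T rule: finite_induct)
      (auto simp: convex_cone_hull_contains_0 intro!: convex_cone_hull_add convex_cone_hull_mul intro: hull_inc)
  then show "pos_cone S \<subseteq> convex_cone hull S"
    unfolding pos_cone_def by blast
next
  have "x \<in> pos_cone S" if "x \<in> S" for x
    unfolding pos_cone_def
  proof (intro CollectI exI conjI)
    show "\<forall>v\<in>S. 0 \<le> (if v \<in> {x} then 1 else (0::real))"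
      by simp
    show "x = (\<Sum>v\<in>S. (if v \<in> {x} then 1 else 0) *\<^sub>R v)"
      using that by (simp only: sum_if_scaleR[OF assms]) simp
  qed
  moreover have "convex_cone (pos_cone S)"
  proof (unfold convex_cone_iff, intro conjI ballI allI impI)
    show "0 \<in> pos_cone S"
      unfolding pos_cone_def by (auto intro!: exI[of _ "\<lambda>_. 0"])
  next
    fix y z assume "y \<in> pos_cone S" "z \<in> pos_cone S"
    then obtain a b where "\<forall>v\<in>S. 0 \<le> a v" "y = (\<Sum>v\<in>S. a v *\<^sub>R v)"
      and "\<forall>v\<in>S. 0 \<le> b v" "z = (\<Sum>v\<in>S. b v *\<^sub>R v)"
      unfolding pos_cone_def by blast
    then show "y + z \<in> pos_cone S"
      unfolding pos_cone_def
      by (auto intro!: exI[of _ "\<lambda>v. a v + b v"] simp: scaleR_add_left sum.distrib)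
  next
    fix y and t :: real assume "y \<in> pos_cone S" "0 \<le> t"
    then obtain a where "\<forall>v\<in>S. 0 \<le> a v" "y = (\<Sum>v\<in>S. a v *\<^sub>R v)"
      unfolding pos_cone_def by blast
    then show "t *\<^sub>R y \<in> pos_cone S"
      unfolding pos_cone_def using \<open>0 \<le> t\<close>
      by (auto intro!: exI[of _ "\<lambda>v. t * a v"] simp: scaleR_sum_right)
  qed
  ultimately show "convex_cone hull S \<subseteq> pos_cone S"
    by (intro hull_minimal) auto
qed

lemma closed_pos_cone: "finite S \<Longrightarrow> closed (pos_cone S)"
  by (simp add: pos_cone_eq_convex_cone_hull closed_convex_cone_hull)

lemma pos_cone_mono: "finite T \<Longrightarrow> S \<subseteq> T \<Longrightarrow> pos_cone S \<subseteq> pos_cone T"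
  by (simp add: pos_cone_eq_convex_cone_hull finite_subset hull_mono)

lemma finite_closed_cover_ray:
  fixes p v :: "'a::real_normed_vector"
  assumes "finite \<F>" "\<And>C. C \<in> \<F> \<Longrightarrow> closed C" "\<Union>\<F> = UNIV"
  shows "\<exists>C\<in>\<F>. \<exists>\<epsilon>>0. p \<in> C \<and> p + \<epsilon> *\<^sub>R v \<in> C"
proof -
  define U where "U = (\<Inter>C\<in>{C\<in>\<F>. p \<notin> C}. - C)"
  have "open U" "p \<in> U"
    unfolding U_def using assms(1,2) by (auto intro!: open_INT open_Compl)
  then obtain \<delta> where "\<delta> > 0" and \<delta>: "ball p \<delta> \<subseteq> U"
    by (meson open_contains_ball)
  define \<epsilon> where "\<epsilon> = \<delta> / (norm v + 1)"
  have "\<epsilon> > 0" "\<epsilon> * norm v < \<delta>"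
    using \<open>\<delta> > 0\<close> by (auto simp: \<epsilon>_def field_simps add_pos_nonneg)
  then have "p + \<epsilon> *\<^sub>R v \<in> U"
    using \<delta> by (auto simp: dist_norm)
  moreover obtain C where "C \<in> \<F>" "p + \<epsilon> *\<^sub>R v \<in> C"
    using assms(3) by blast
  ultimately show ?thesis
    using \<open>\<epsilon> > 0\<close> unfolding U_def by blast
qed

lemma complete_nonsingular_fanD:
  assumes "complete_nonsingular_fan R \<Delta>"
  shows "finite R" "\<And>\<rho>. \<rho> \<in> R \<Longrightarrow> primitive_vector \<rho>" "\<And>\<sigma>. \<sigma> \<in> \<Delta> \<Longrightarrow> \<sigma> \<subseteq> R"
    "\<And>\<rho>. \<rho> \<in> R \<Longrightarrow> {\<rho>} \<in> \<Delta>" "\<And>\<sigma> \<tau>. \<sigma> \<in> \<Delta> \<Longrightarrow> \<tau> \<subseteq> \<sigma> \<Longrightarrow> \<tau> \<in> \<Delta>"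
    "\<And>\<sigma>. \<sigma> \<in> \<Delta> \<Longrightarrow> part_of_Z_basis \<sigma>"
    "\<And>\<sigma> \<tau>. \<sigma> \<in> \<Delta> \<Longrightarrow> \<tau> \<in> \<Delta> \<Longrightarrow> pos_cone \<sigma> \<inter> pos_cone \<tau> = pos_cone (\<sigma> \<inter> \<tau>)"
    "(\<Union>\<sigma>\<in>\<Delta>. pos_cone \<sigma>) = UNIV"
  using assms unfolding complete_nonsingular_fan_def by simp_all

lemma finite_fan_cones:
  assumes "complete_nonsingular_fan R \<Delta>"
  shows "finite \<Delta>"
proof (rule finite_subset)
  show "\<Delta> \<subseteq> Pow R"
    using complete_nonsingular_fanD(3)[OF assms] by blast
qed (simp add: complete_nonsingular_fanD(1)[OF assms])

lemma fan_cone_finite: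
  assumes "complete_nonsingular_fan R \<Delta>" "\<sigma> \<in> \<Delta>"
  shows "finite \<sigma>"
  using complete_nonsingular_fanD(1,3)[OF assms(1)] assms(2) finite_subset by blast

lemma lattice_point_Basis: "b \<in> Basis \<Longrightarrow> lattice_point (b :: real ^ 'n)"
  unfolding lattice_point_def Basis_vec_def by (auto simp: axis_def)

lemma part_of_Z_basis_independent:
  fixes \<sigma> :: "(real ^ 'n) set"
  assumes "part_of_Z_basis \<sigma>"
  shows "independent \<sigma>"
proof -
  obtain B where B: "\<sigma> \<subseteq> B" "finite B" "card B = CARD('n)"
    and Z_span: "\<And>x. lattice_point x \<Longrightarrow> \<exists>k::real ^ 'n \<Rightarrow> int. x = (\<Sum>b\<in>B. of_int (k b) *\<^sub>R b)"
    using assms unfolding part_of_Z_basis_def by blast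
  have "Basis \<subseteq> span B"
  proof
    fix b :: "real ^ 'n" assume "b \<in> Basis"
    then obtain k :: "real ^ 'n \<Rightarrow> int" where "b = (\<Sum>c\<in>B. of_int (k c) *\<^sub>R c)"
      using Z_span lattice_point_Basis by blast
    then show "b \<in> span B"
      by (simp add: span_sum span_scale span_base)
  qed
  then have "span B = UNIV"
    using span_mono[of Basis "span B"] by (simp add: span_span top_unique)
  then have "independent B"
    by (intro card_le_dim_spanning[of B UNIV]) (auto simp: B dim_UNIV)
  then show ?thesis
    using B(1) independent_mono by blast
qed

lemma fan_cone_independent:
  assumes "complete_nonsingular_fan R \<Delta>" "\<sigma> \<in> \<Delta>"
  shows "independent \<sigma>"
  using part_of_Z_basis_independent complete_nonsingular_fanD(6)[OF assms] .

text \<open>A vector lying in two cones lies in their common face, where its coordinates are unique.\<close>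
lemma fan_coeffs_unique:
  assumes F: "complete_nonsingular_fan R \<Delta>" and "\<sigma> \<in> \<Delta>" "\<tau> \<in> \<Delta>"
    and "\<forall>\<rho>\<in>\<sigma>. 0 \<le> a \<rho>" "\<forall>\<rho>\<in>\<tau>. 0 \<le> b \<rho>"
    and eq: "(\<Sum>\<rho>\<in>\<sigma>. a \<rho> *\<^sub>R \<rho>) = (\<Sum>\<rho>\<in>\<tau>. b \<rho> *\<^sub>R \<rho>)"
    and "\<rho> \<in> \<sigma>"
  shows "a \<rho> = (if \<rho> \<in> \<tau> then b \<rho> else 0)"
proof -
  have "(\<Sum>\<rho>\<in>\<sigma>. a \<rho> *\<^sub>R \<rho>) \<in> pos_cone \<sigma>" "(\<Sum>\<rho>\<in>\<tau>. b \<rho> *\<^sub>R \<rho>) \<in> pos_cone \<tau>"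
    using assms(4,5) unfolding pos_cone_def by blast+
  then have "(\<Sum>\<rho>\<in>\<sigma>. a \<rho> *\<^sub>R \<rho>) \<in> pos_cone \<sigma> \<inter> pos_cone \<tau>"
    unfolding eq by blast
  then obtain c where c: "(\<Sum>\<rho>\<in>\<sigma>. a \<rho> *\<^sub>R \<rho>) = (\<Sum>\<rho>\<in>\<sigma> \<inter> \<tau>. c \<rho> *\<^sub>R \<rho>)"
    using complete_nonsingular_fanD(7)[OF F assms(2,3)] unfolding pos_cone_def by blast
  have fin: "finite \<sigma>" "finite \<tau>"
    using fan_cone_finite[OF F] assms(2,3) by auto
  have "a \<rho> = (if \<rho> \<in> \<tau> then c \<rho> else 0)"
    using c fin(1) \<open>\<rho> \<in> \<sigma>\<close>
    by (intro independent_sum_scaleR_coeffs_eq[OF fan_cone_independent[OF F assms(2)]])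
      (simp_all add: sum_if_scaleR)
  moreover have "b \<rho> = c \<rho>" if "\<rho> \<in> \<tau>"
  proof -
    have "b \<rho> = (if \<rho> \<in> \<sigma> then c \<rho> else 0)"
      using c fin(2) that unfolding eq
      by (intro independent_sum_scaleR_coeffs_eq[OF fan_cone_independent[OF F assms(3)]])
        (simp_all add: sum_if_scaleR Int_commute)
    then show ?thesis
      using \<open>\<rho> \<in> \<sigma>\<close> by simp
  qed
  ultimately show ?thesis
    by simp
qed

lemma fan_sum_in_pos_cone_imp_subset:
  assumes F: "complete_nonsingular_fan R \<Delta>" and "\<tau> \<in> \<Delta>" "\<sigma> \<in> \<Delta>"
    and "(\<Sum>\<rho>\<in>\<tau>. \<rho>) \<in> pos_cone \<sigma>"
  shows "\<tau> \<subseteq> \<sigma>"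
proof
  fix \<rho> assume "\<rho> \<in> \<tau>"
  obtain c where c: "\<forall>\<rho>\<in>\<sigma>. 0 \<le> c \<rho>" "(\<Sum>\<rho>\<in>\<tau>. 1 *\<^sub>R \<rho>) = (\<Sum>\<rho>\<in>\<sigma>. c \<rho> *\<^sub>R \<rho>)"
    using assms(4) unfolding pos_cone_def by auto
  have "(1::real) = (if \<rho> \<in> \<sigma> then c \<rho> else 0)"
    using fan_coeffs_unique[OF F assms(2,3) _ c(1) c(2) \<open>\<rho> \<in> \<tau>\<close>] by simp
  then show "\<rho> \<in> \<sigma>"
    by (auto split: if_splits)
qed

lemma fan_sum_eq_imp_eq:
  assumes "complete_nonsingular_fan R \<Delta>" "\<sigma> \<in> \<Delta>" "\<tau> \<in> \<Delta>" "(\<Sum>\<rho>\<in>\<sigma>. \<rho>) = (\<Sum>\<rho>\<in>\<tau>. \<rho>)"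
  shows "\<sigma> = \<tau>"
proof
  show "\<sigma> \<subseteq> \<tau>"
    using fan_sum_in_pos_cone_imp_subset[OF assms(1-3)] sum_in_pos_cone[of \<tau>] assms(4) by simp
  show "\<tau> \<subseteq> \<sigma>"
    using fan_sum_in_pos_cone_imp_subset[OF assms(1,3,2)] sum_in_pos_cone[of \<sigma>] assms(4) by simp
qed

lemma fan_exists_maximal_cone:
  assumes F: "complete_nonsingular_fan R \<Delta>" and "\<tau> \<in> \<Delta>"
  shows "\<exists>\<sigma>. maximal_cone \<Delta> \<sigma> \<and> \<tau> \<subseteq> \<sigma>"
proof -
  obtain \<sigma> where "\<sigma> \<in> \<Delta>" "\<tau> \<subseteq> \<sigma>" "\<forall>\<sigma>'\<in>\<Delta>. \<sigma> \<subseteq> \<sigma>' \<longrightarrow> \<sigma> = \<sigma>'"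
    using finite_has_maximal2[OF finite_fan_cones[OF F] assms(2)] by blast
  then show ?thesis
    unfolding maximal_cone_def by blast
qed

lemma fan_exists_maximal_cone_near:
  assumes F: "complete_nonsingular_fan R \<Delta>" and "\<tau> \<in> \<Delta>"
  shows "\<exists>\<sigma>. maximal_cone \<Delta> \<sigma> \<and> \<tau> \<subseteq> \<sigma> \<and> (\<exists>\<epsilon>>0. (\<Sum>\<rho>\<in>\<tau>. \<rho>) + \<epsilon> *\<^sub>R v \<in> pos_cone \<sigma>)"
proof -
  obtain \<sigma> \<epsilon> where "\<sigma> \<in> \<Delta>" "\<epsilon> > 0" and \<sigma>: "(\<Sum>\<rho>\<in>\<tau>. \<rho>) \<in> pos_cone \<sigma>"
    and near: "(\<Sum>\<rho>\<in>\<tau>. \<rho>) + \<epsilon> *\<^sub>R v \<in> pos_cone \<sigma>"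
    using finite_closed_cover_ray[of "pos_cone ` \<Delta>" "\<Sum>\<rho>\<in>\<tau>. \<rho>" v]
      finite_fan_cones[OF F] closed_pos_cone fan_cone_finite[OF F] complete_nonsingular_fanD(8)[OF F]
    by auto
  obtain \<sigma>' where "maximal_cone \<Delta> \<sigma>'" "\<sigma> \<subseteq> \<sigma>'"
    using fan_exists_maximal_cone[OF F \<open>\<sigma> \<in> \<Delta>\<close>] by blast
  moreover have "\<tau> \<subseteq> \<sigma>"
    using fan_sum_in_pos_cone_imp_subset[OF F \<open>\<tau> \<in> \<Delta>\<close> \<open>\<sigma> \<in> \<Delta>\<close> \<sigma>] .
  moreover have "pos_cone \<sigma> \<subseteq> pos_cone \<sigma>'"
    using calculation fan_cone_finite[OF F] by (intro pos_cone_mono) (auto simp: maximal_cone_def)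
  ultimately show ?thesis
    using \<open>\<epsilon> > 0\<close> near by blast
qed

lemma fan_exists_maximal_cone_avoiding:
  assumes F: "complete_nonsingular_fan R \<Delta>" and "\<tau> \<in> \<Delta>" "y \<notin> \<tau>"
  shows "\<exists>\<sigma>. maximal_cone \<Delta> \<sigma> \<and> \<tau> \<subseteq> \<sigma> \<and> y \<notin> \<sigma>"
proof -
  obtain \<sigma> \<epsilon> where \<sigma>: "maximal_cone \<Delta> \<sigma>" "\<tau> \<subseteq> \<sigma>" "\<epsilon> > 0"
    and "(\<Sum>\<rho>\<in>\<tau>. \<rho>) + \<epsilon> *\<^sub>R (- y) \<in> pos_cone \<sigma>"
    using fan_exists_maximal_cone_near[OF F \<open>\<tau> \<in> \<Delta>\<close>] by blast
  then obtain c where c: "\<forall>\<rho>\<in>\<sigma>. 0 \<le> c \<rho>" "(\<Sum>\<rho>\<in>\<tau>. \<rho>) - \<epsilon> *\<^sub>R y = (\<Sum>\<rho>\<in>\<sigma>. c \<rho> *\<^sub>R \<rho>)"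
    unfolding pos_cone_def by auto
  have "\<sigma> \<in> \<Delta>"
    using \<sigma>(1) by (simp add: maximal_cone_def)
  have "y \<notin> \<sigma>"
  proof
    assume "y \<in> \<sigma>"
    have fin: "finite \<sigma>"
      using fan_cone_finite[OF F \<open>\<sigma> \<in> \<Delta>\<close>] .
    have "(\<Sum>\<rho>\<in>\<sigma>. ((if \<rho> \<in> \<tau> then 1 else 0) - (if \<rho> \<in> {y} then \<epsilon> else 0)) *\<^sub>R \<rho>)
        = (\<Sum>\<rho>\<in>\<tau>. \<rho>) - \<epsilon> *\<^sub>R y"
      using \<sigma>(2) \<open>y \<in> \<sigma>\<close>
      by (simp only: scaleR_diff_left sum_subtractf sum_if_scaleR[OF fin]) (simp add: Int_absorb1)
    then have "(if y \<in> \<tau> then 1 else 0) - (if y \<in> {y} then \<epsilon> else 0) = c y"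
      using c(2) \<open>y \<in> \<sigma>\<close> fan_cone_independent[OF F \<open>\<sigma> \<in> \<Delta>\<close>] fin
      by (intro independent_sum_scaleR_coeffs_eq[of \<sigma>]) auto
    then show False
      using c(1) \<open>y \<in> \<sigma>\<close> \<open>y \<notin> \<tau>\<close> \<open>\<epsilon> > 0\<close> by fastforce
  qed
  then show ?thesis
    using \<sigma> by blast
qed

lemma maximal_cone_span_UNIV:
  assumes F: "complete_nonsingular_fan R \<Delta>" and "maximal_cone \<Delta> \<sigma>"
  shows "span \<sigma> = UNIV"
proof (rule ccontr)
  assume "span \<sigma> \<noteq> UNIV"
  then obtain v where v: "v \<notin> span \<sigma>"
    by blast
  obtain \<sigma>' \<epsilon> where "maximal_cone \<Delta> \<sigma>'" "\<sigma> \<subseteq> \<sigma>'" "\<epsilon> > 0"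
    and near: "(\<Sum>\<rho>\<in>\<sigma>. \<rho>) + \<epsilon> *\<^sub>R v \<in> pos_cone \<sigma>'"
    using fan_exists_maximal_cone_near[OF F, of \<sigma> v] assms(2) by (auto simp: maximal_cone_def)
  then have "\<sigma>' = \<sigma>"
    using assms(2) by (auto simp: maximal_cone_def)
  then have "(\<Sum>\<rho>\<in>\<sigma>. \<rho>) + \<epsilon> *\<^sub>R v \<in> span \<sigma>"
    using near pos_cone_subset_span by blast
  then have "\<epsilon> *\<^sub>R v \<in> span \<sigma>"
    by (metis add_diff_cancel_left' span_base span_diff span_sum)
  then show False
    using v \<open>\<epsilon> > 0\<close> span_scale[of "\<epsilon> *\<^sub>R v" \<sigma> "inverse \<epsilon>"] by simp
qed

text \<open>A maximal cone of a nonsingular fan is a \<int>-basis of the lattice.\<close>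
lemma maximal_cone_inner_Ints:
  fixes m :: "real ^ 'n"
  assumes F: "complete_nonsingular_fan R \<Delta>" and "maximal_cone \<Delta> \<sigma>"
    and "\<And>\<rho>. \<rho> \<in> \<sigma> \<Longrightarrow> m \<bullet> \<rho> \<in> \<int>" and "lattice_point x"
  shows "m \<bullet> x \<in> \<int>"
proof -
  have "\<sigma> \<in> \<Delta>"
    using assms(2) by (simp add: maximal_cone_def)
  then obtain B where B: "\<sigma> \<subseteq> B" "finite B" "card B = CARD('n)"
    and Z_span: "\<forall>x. lattice_point x \<longrightarrow> (\<exists>k::real ^ 'n \<Rightarrow> int. x = (\<Sum>b\<in>B. of_int (k b) *\<^sub>R b))"
    using complete_nonsingular_fanD(6)[OF F] unfolding part_of_Z_basis_def by blast
  have "card \<sigma> = dim (span \<sigma>)"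
    using dim_eq_card_independent[OF fan_cone_independent[OF F \<open>\<sigma> \<in> \<Delta>\<close>]] by (simp add: dim_span)
  also have "\<dots> = CARD('n)"
    using maximal_cone_span_UNIV[OF F assms(2)] by (simp add: dim_UNIV)
  finally have "\<sigma> = B"
    using card_subset_eq[OF B(2,1)] B(3) by simp
  then obtain k :: "real ^ 'n \<Rightarrow> int" where "x = (\<Sum>b\<in>\<sigma>. of_int (k b) *\<^sub>R b)"
    using Z_span assms(4) by blast
  then have "m \<bullet> x = (\<Sum>b\<in>\<sigma>. of_int (k b) * (m \<bullet> b))"
    by (simp add: inner_sum_right)
  also have "\<dots> \<in> \<int>"
    using assms(3) by (intro Ints_sum Ints_mult) auto
  finally show ?thesis .
qed

lemma primitive_set_finite:
  assumes "complete_nonsingular_fan R \<Delta>" "primitive_set R \<Delta> P"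
  shows "finite P"
  using assms complete_nonsingular_fanD(1) finite_subset by (auto simp: primitive_set_def)

lemma primitive_set_sum_notin:
  assumes F: "complete_nonsingular_fan R \<Delta>" and P: "primitive_set R \<Delta> P"
    and "(\<Sum>\<rho>\<in>P. \<rho>) = r" "r \<in> R"
  shows "r \<notin> P"
proof
  assume "r \<in> P"
  have fin: "finite P"
    using primitive_set_finite[OF F P] .
  have "P \<noteq> {r}"
    using P complete_nonsingular_fanD(4)[OF F \<open>r \<in> R\<close>] by (auto simp: primitive_set_def)
  then obtain q where "q \<in> P - {r}"
    using \<open>r \<in> P\<close> by blast
  have "P - {r} \<in> \<Delta>"
    using P \<open>r \<in> P\<close> by (auto simp: primitive_set_def)
  moreover have "(\<Sum>\<rho>\<in>P - {r}. (\<lambda>_. 1) \<rho> *\<^sub>R \<rho>) = (\<Sum>\<rho>\<in>P - {r}. (\<lambda>_. 0) \<rho> *\<^sub>R \<rho>)"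
    using sum.remove[OF fin \<open>r \<in> P\<close>, of "\<lambda>x. x"] assms(3) by simp
  ultimately have "(\<lambda>_. 1::real) q = (\<lambda>_. 0) q"
    using fin by (intro independent_sum_scaleR_coeffs_eq[OF fan_cone_independent[OF F] _ _ \<open>q \<in> P - {r}\<close>]) auto
  then show False
    by simp
qed

lemma fano_sum_meets_maximal_cone:
  assumes F: "complete_nonsingular_fan R \<Delta>" and fano: "orbit_closure_fano R \<Delta> Q"
    and \<sigma>: "maximal_cone \<Delta> \<sigma>" "Q \<subseteq> \<sigma>" "r \<in> \<sigma>" "r \<notin> Q"
    and P: "P \<subseteq> R" "Q \<subseteq> P" "(\<Sum>\<rho>\<in>P. \<rho>) = r"
    and faces: "\<And>p. p \<in> P - Q \<Longrightarrow> insert p Q \<in> \<Delta>"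
  shows "(P - Q) \<inter> \<sigma> \<noteq> {}"
proof
  assume disjoint: "(P - Q) \<inter> \<sigma> = {}"
  obtain m where m0: "\<forall>\<rho>\<in>Q. m \<bullet> \<rho> = 0" and m1: "\<forall>\<rho>\<in>\<sigma> - Q. m \<bullet> \<rho> = 1"
    and m_less: "\<forall>\<rho>\<in>R. \<rho> \<notin> \<sigma> \<and> Q \<union> {\<rho>} \<in> \<Delta> \<longrightarrow> m \<bullet> \<rho> < 1"
    using fano \<sigma>(1,2) unfolding orbit_closure_fano_def by blast
  have "finite P"
    using P(1) complete_nonsingular_fanD(1)[OF F] finite_subset by blast
  have "m \<bullet> r = (\<Sum>p\<in>P. m \<bullet> p)"
    unfolding P(3)[symmetric] by (rule inner_sum_right)
  also have "\<dots> = (\<Sum>p\<in>P - Q. m \<bullet> p) + (\<Sum>p\<in>Q. m \<bullet> p)"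
    by (rule sum.subset_diff[OF P(2) \<open>finite P\<close>])
  finally have "(\<Sum>p\<in>P - Q. m \<bullet> p) = 1"
    using m0 m1 \<sigma>(3,4) by simp
  moreover have "m \<bullet> p \<le> 0" if "p \<in> P - Q" for p
  proof -
    have "m \<bullet> p < 1"
      using m_less faces[OF that] that disjoint P(1) by auto
    moreover have "m \<bullet> p \<in> \<int>"
    proof (rule maximal_cone_inner_Ints[OF F \<sigma>(1)])
      show "m \<bullet> \<rho> \<in> \<int>" if "\<rho> \<in> \<sigma>" for \<rho>
        using m0 m1 that by (cases "\<rho> \<in> Q") auto
      show "lattice_point p"
        using complete_nonsingular_fanD(2)[OF F] that P(1) by (auto simp: primitive_vector_def)
    qed
    ultimately show ?thesis
      by (auto elim: Ints_cases)
  qed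
  then have "(\<Sum>p\<in>P - Q. m \<bullet> p) \<le> 0"
    by (intro sum_nonpos) blast
  ultimately show False
    by simp
qed

lemma primitive_set_exchange:
  assumes F: "complete_nonsingular_fan R \<Delta>" and fano: "\<forall>\<tau>\<in>\<Delta>. orbit_closure_fano R \<Delta> \<tau>"
    and P: "primitive_set R \<Delta> P" and "(\<Sum>\<rho>\<in>P. \<rho>) = r" "r \<in> R"
    and "{r, z} \<in> \<Delta>" "y \<in> P" "y \<noteq> z"
  shows "(P - {y}) \<union> {r, z} \<in> \<Delta>"
proof -
  have "r \<notin> P"
    using primitive_set_sum_notin[OF F P assms(4,5)] .
  define \<Q> where "\<Q> = {Q. Q \<subseteq> P - {y} \<and> Q \<union> {r, z} \<in> \<Delta>}"
  have "finite \<Q>"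
    unfolding \<Q>_def using primitive_set_finite[OF F P] by simp
  moreover have "{} \<in> \<Q>"
    unfolding \<Q>_def using \<open>{r, z} \<in> \<Delta>\<close> by simp
  ultimately obtain Q where "Q \<in> \<Q>" and Q_max: "\<forall>Q'\<in>\<Q>. Q \<subseteq> Q' \<longrightarrow> Q = Q'"
    using finite_has_maximal2 by blast
  then have Q: "Q \<subseteq> P - {y}" "Q \<union> {r, z} \<in> \<Delta>"
    unfolding \<Q>_def by auto
  have "Q = P - {y}"
  proof (rule ccontr)
    assume "Q \<noteq> P - {y}"
    then obtain q where q: "q \<in> P - {y} - Q"
      using Q(1) by blast
    have "y \<notin> Q \<union> {r, z}"
      using Q(1) \<open>r \<notin> P\<close> assms(7,8) by auto
    then obtain \<sigma> where \<sigma>: "maximal_cone \<Delta> \<sigma>" "Q \<union> {r, z} \<subseteq> \<sigma>" "y \<notin> \<sigma>"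
      using fan_exists_maximal_cone_avoiding[OF F Q(2)] by blast
    have "Q \<in> \<Delta>"
      using complete_nonsingular_fanD(5)[OF F Q(2)] by blast
    have "insert p Q \<in> \<Delta>" if "p \<in> P - Q" for p
    proof -
      have "insert p Q \<subset> P"
        using that q Q(1) assms(7) by (cases "p = y") auto
      then show ?thesis
        using P by (simp add: primitive_set_def)
    qed
    then have "(P - Q) \<inter> \<sigma> \<noteq> {}"
      using fano_sum_meets_maximal_cone[OF F _ \<sigma>(1) _ _ _ _ _ assms(4)] fano \<open>Q \<in> \<Delta>\<close> \<sigma>(2) Q(1)
        \<open>r \<notin> P\<close> P by (auto simp: primitive_set_def)
    then obtain p where p: "p \<in> P - Q" "p \<in> \<sigma>"
      by blast
    then have "insert p Q \<in> \<Q>"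
      unfolding \<Q>_def using \<sigma> Q(1) complete_nonsingular_fanD(5)[OF F] by (auto simp: maximal_cone_def)
    then show False
      using Q_max p(1) by blast
  qed
  then show ?thesis
    using Q(2) by simp
qed

lemma fan_sum_add_eq_imp_eq:
  assumes F: "complete_nonsingular_fan R \<Delta>"
    and \<sigma>: "A \<union> {a, b} \<in> \<Delta>" and \<tau>: "B \<union> {a, b} \<in> \<Delta>"
    and "a \<notin> A" and eq: "(\<Sum>\<rho>\<in>A. \<rho>) + b = (\<Sum>\<rho>\<in>B. \<rho>) + a"
  shows "A = B"
proof -
  define f where "f \<rho> = (if \<rho> \<in> A then 1 else 0) + (if \<rho> \<in> {b} then 1 else (0::real))" for \<rho>
  define g where "g \<rho> = (if \<rho> \<in> B then 1 else 0) + (if \<rho> \<in> {a} then 1 else (0::real))" for \<rho>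
  have fin: "finite (A \<union> {a, b})" "finite (B \<union> {a, b})"
    using fan_cone_finite[OF F] \<sigma> \<tau> by blast+
  have "(\<Sum>\<rho>\<in>A \<union> {a, b}. f \<rho> *\<^sub>R \<rho>) = (\<Sum>\<rho>\<in>A. \<rho>) + b"
    unfolding f_def scaleR_add_left sum.distrib sum_if_scaleR[OF fin(1)] Un_Int_eq by simp
  also have "\<dots> = (\<Sum>\<rho>\<in>B \<union> {a, b}. g \<rho> *\<^sub>R \<rho>)"
    unfolding eq g_def scaleR_add_left sum.distrib sum_if_scaleR[OF fin(2)] Un_Int_eq by simp
  finally have "f a = (if a \<in> B \<union> {a, b} then g a else 0)"
    using fan_coeffs_unique[OF F \<sigma> \<tau>, of f g a] by (simp add: f_def g_def)
  then have "a = b"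
    using \<open>a \<notin> A\<close> by (auto simp: f_def g_def split: if_splits)
  then have "(\<Sum>\<rho>\<in>A. \<rho>) = (\<Sum>\<rho>\<in>B. \<rho>)"
    using eq by simp
  moreover have "A \<in> \<Delta>" "B \<in> \<Delta>"
    using complete_nonsingular_fanD(5)[OF F] \<sigma> \<tau> by blast+
  ultimately show ?thesis
    using fan_sum_eq_imp_eq[OF F] by blast
qed

theorem lemma3p7:
  fixes R :: "(real ^ 'n) set" and \<Delta> :: "(real ^ 'n) set set"
    and P Q :: "(real ^ 'n) set" and \<rho>' \<rho>h' :: "real ^ 'n"
  assumes "complete_nonsingular_fan R \<Delta>"
    and "toric_fano R \<Delta>"
    and "\<forall>\<tau>\<in>\<Delta>. orbit_closure_fano R \<Delta> \<tau>"
    and "primitive_set R \<Delta> P" and "primitive_set R \<Delta> Q" and "P \<noteq> Q"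
    and "\<rho>' \<in> R" and "\<rho>h' \<in> R"
    and "primitive_relation R \<Delta> P {\<rho>'} (\<lambda>_. 1)"
    and "primitive_relation R \<Delta> Q {\<rho>h'} (\<lambda>_. 1)"
    and "\<rho>' = \<rho>h' \<or> {\<rho>', \<rho>h'} \<in> \<Delta>"
  shows "P \<inter> Q = {}"
proof (rule ccontr)
  \<comment> \<open>\<open>toric_fano R \<Delta>\<close> is the case \<open>\<tau> = {}\<close> of the third hypothesis and is not needed.\<close>
  note F = assms(1) and fano = assms(3)
  assume "P \<inter> Q \<noteq> {}"
  then obtain x where "x \<in> P" "x \<in> Q"
    by blast
  have sums: "(\<Sum>\<rho>\<in>P. \<rho>) = \<rho>'" "(\<Sum>\<rho>\<in>Q. \<rho>) = \<rho>h'"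
    using assms(9,10) by (simp_all add: primitive_relation_def)
  have "\<rho>' \<notin> P" "\<rho>h' \<notin> Q"
    using primitive_set_sum_notin[OF F] assms(4,5,7,8) sums by blast+
  have cone: "{\<rho>', \<rho>h'} \<in> \<Delta>" "{\<rho>h', \<rho>'} \<in> \<Delta>"
    using assms(11) complete_nonsingular_fanD(4)[OF F assms(7)] by (auto simp: insert_commute)
  have "(P - {x}) \<union> {\<rho>', \<rho>h'} \<in> \<Delta>"
    using primitive_set_exchange[OF F fano assms(4) sums(1) assms(7) cone(1) \<open>x \<in> P\<close>]
      \<open>x \<in> Q\<close> \<open>\<rho>h' \<notin> Q\<close> by blast
  moreover have "(Q - {x}) \<union> {\<rho>h', \<rho>'} \<in> \<Delta>"
    using primitive_set_exchange[OF F fano assms(5) sums(2) assms(8) cone(2) \<open>x \<in> Q\<close>]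
      \<open>x \<in> P\<close> \<open>\<rho>' \<notin> P\<close> by blast
  then have "(Q - {x}) \<union> {\<rho>', \<rho>h'} \<in> \<Delta>"
    by (simp add: insert_commute)
  moreover have "(\<Sum>\<rho>\<in>P - {x}. \<rho>) + \<rho>h' = (\<Sum>\<rho>\<in>Q - {x}. \<rho>) + \<rho>'"
    using sums \<open>x \<in> P\<close> \<open>x \<in> Q\<close> primitive_set_finite[OF F] assms(4,5) by (simp add: sum_diff1)
  ultimately have "P - {x} = Q - {x}"
    using fan_sum_add_eq_imp_eq[OF F] \<open>\<rho>' \<notin> P\<close> by blast
  then show False
    using \<open>x \<in> P\<close> \<open>x \<in> Q\<close> assms(6) by blast
qed

end
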